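(* Let $T>0$, $\lambda>0$, $C>0$, $U=[-C,C]$, and set $\rho_T:=\lambda-T$. For each $N\ge1$ and initial datum $\boldsymbol{x}^0_N\in[-1,1]^N$, let $(\boldsymbol{x}^*_N(\cdot),\boldsymbol{u}^*_N(\cdot))$ be the optimal pair of the problem: minimise $\frac{\lambda}{2N}\sum_{i=1}^N\int_0^Tu_i(t)^2dt-\frac1{2N}\sum_{i=1}^N|x_i(T)-\bar{\boldsymbol{x}}(T)|^2$ over $\boldsymbol{u}\in L^\infty([0,T],U^N)$ subject to $\dot x_i=u_i$, $x_i(0)=x^0_i$, where $\bar{\boldsymbol{x}}=\frac1N\sum_ix_i$. The following assertions are equivalent: (a) $\lambda>T$; (b) for any sequence of empirical measures $\mu^0_N=\frac1N\sum_i\delta_{x^0_i}\in\mathcal{P}_N([-1,1])$ whose supports are symmetric with respect to the origin and which converge narrowly to $\mu^0=\frac12\mathbb{1}_{[-1,1]}\mathcal{L}^1$, the associated optimal pairs satisfy $|u^*_i(t)-u^*_j(t)|\le\frac1{\rho_T}|x^*_i(t)-x^*_j(t)|$ for all $N$, all $i,j\in\{1,\dots,N\}$ and all times $t\in[0,T]$.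
   Context: Here $\mathcal{P}_N([-1,1])$ is the set of empirical measures $\frac1N\sum_{i=1}^N\delta_{x_i}$ with $x_i\in[-1,1]$, and symmetric initial data means that the configuration $(x^0_1,\dots,x^0_N)$ is invariant under $x\mapsto-x$, so that $\bar{\boldsymbol{x}}^*_N(\cdot)\equiv0$ along the optimal trajectory. The constant $\lambda-T$ is the sharp mean-field coercivity constant of this problem (the coercivity condition holds iff $\lambda>T$). *)

theory Defs
  imports "HOL-Probability.Probability"
begin

definition empirical_measure :: "nat \<Rightarrow> (nat \<Rightarrow> real) \<Rightarrow> real measure" where
  "empirical_measure N x = measure_pmf (map_pmf x (pmf_of_set {..<N}))"

definition narrowly_converges :: "(nat \<Rightarrow> real measure) \<Rightarrow> real measure \<Rightarrow> bool" where
  "narrowly_converges \<mu>s \<mu> \<longleftrightarrow>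
     (\<forall>f :: real \<Rightarrow> real. continuous_on UNIV f \<and> bounded (range f) \<longrightarrow>
        (\<lambda>n. integral\<^sup>L (\<mu>s n) f) \<longlonglongrightarrow> integral\<^sup>L \<mu> f)"

definition symmetric_config :: "nat \<Rightarrow> (nat \<Rightarrow> real) \<Rightarrow> bool" where
  "symmetric_config N x \<longleftrightarrow>
     image_mset (\<lambda>i. - x i) (mset_set {..<N}) = image_mset x (mset_set {..<N})"

definition admissible :: "real \<Rightarrow> real \<Rightarrow> nat \<Rightarrow> (nat \<Rightarrow> real \<Rightarrow> real) \<Rightarrow> bool" where
  "admissible T C N u \<longleftrightarrow>
     (\<forall>i<N. u i \<in> borel_measurable (restrict_space lborel {0..T}) \<and>
            (\<forall>t\<in>{0..T}. \<bar>u i t\<bar> \<le> C))"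

definition traj :: "(nat \<Rightarrow> real) \<Rightarrow> (nat \<Rightarrow> real \<Rightarrow> real) \<Rightarrow> nat \<Rightarrow> real \<Rightarrow> real" where
  "traj x0 u i t = x0 i + (LINT s:{0..t}|lborel. u i s)"

definition mean_traj :: "nat \<Rightarrow> (nat \<Rightarrow> real) \<Rightarrow> (nat \<Rightarrow> real \<Rightarrow> real) \<Rightarrow> real \<Rightarrow> real" where
  "mean_traj N x0 u t = (\<Sum>j<N. traj x0 u j t) / real N"

definition cost :: "real \<Rightarrow> real \<Rightarrow> nat \<Rightarrow> (nat \<Rightarrow> real) \<Rightarrow> (nat \<Rightarrow> real \<Rightarrow> real) \<Rightarrow> real" where
  "cost T lam N x0 u =
     lam / (2 * real N) * (\<Sum>i<N. (LINT t:{0..T}|lborel. (u i t)\<^sup>2))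
     - 1 / (2 * real N) * (\<Sum>i<N. (traj x0 u i T - mean_traj N x0 u T)\<^sup>2)"

(* u is an optimal control (the optimal pair is (traj x0 u, u)) *)
definition optimal_control :: "real \<Rightarrow> real \<Rightarrow> real \<Rightarrow> nat \<Rightarrow> (nat \<Rightarrow> real) \<Rightarrow> (nat \<Rightarrow> real \<Rightarrow> real) \<Rightarrow> bool" where
  "optimal_control T lam C N x0 u \<longleftrightarrow>
     admissible T C N u \<and>
     (\<forall>v. admissible T C N v \<longrightarrow> cost T lam N x0 u \<le> cost T lam N x0 v)"

end

theory Submission
  imports Defs
begin

(* Replacing a control by its time average keeps the endpoints x_i(T) and, by Jensen's inequality,
   lowers the energy unless the control is a.e. constant. Hence optimal controls are a.e. constant
   velocities c, and c minimises a finite-dimensional reduced cost over the box [-C,C]^N.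
   Transferring velocity d from agent j to agent i changes the reduced cost by
   T/N (d ((lam - T)(c_i - c_j) - (x_i - x_j)) + (lam - T) d^2), so for lam > T minimality forces
   (lam - T)(c_i - c_j)^2 <= (c_i - c_j)(x_i - x_j); as x_i(t) - x_j(t) = x_i - x_j + t (c_i - c_j),
   this is the Lipschitz bound. For lam <= T the right-hand side of the bound is non-positive, so it
   forces u_i = u_j a.e.; but for two agents starting at -1/2 and 1/2, the bang-bang control that
   separates them at full speed -C and C is optimal. *)

lemma set_integrable_bounded_interval:
  fixes f :: "real \<Rightarrow> real"
  assumes "set_borel_measurable lborel {a..b} f" and "\<forall>s\<in>{a..b}. \<bar>f s\<bar> \<le> B" and "t \<le> b"
  shows "set_integrable lborel {a..t} f"
proof -
  have "set_integrable lborel {a..b} f"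
    unfolding set_integrable_def using assms(1,2)
    by (intro integrableI_bounded_set[where A="{a..b}" and B=B])
       (auto simp: set_borel_measurable_def emeasure_lborel_Icc_eq)
  then show ?thesis
    by (rule set_integrable_subset) (use \<open>t \<le> b\<close> in auto)
qed

lemma set_integral_eq_const_AE:
  fixes f :: "real \<Rightarrow> real"
  assumes "set_borel_measurable lborel {a..b} f" and "AE s in lborel. s \<in> {a..b} \<longrightarrow> f s = c"
    and "a \<le> b"
  shows "(LINT s:{a..b}|lborel. f s) = c * (b - a)"
proof -
  have "(LINT s:{a..b}|lborel. f s) = (LINT s:{a..b}|lborel. c)"
    unfolding set_lebesgue_integral_def using assms(1,2)
    by (intro integral_cong_AE) (auto simp: set_borel_measurable_def indicator_def)
  also have "\<dots> = c * (b - a)"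
    using \<open>a \<le> b\<close> by (simp add: set_integral_const)
  finally show ?thesis .
qed

lemma set_integral_square_deviation:
  fixes f :: "real \<Rightarrow> real"
  assumes f: "set_integrable lborel {a..b} f" and f2: "set_integrable lborel {a..b} (\<lambda>s. (f s)\<^sup>2)"
    and "a \<le> b"
  shows "set_integrable lborel {a..b} (\<lambda>s. (f s - m)\<^sup>2)"
    and "(LINT s:{a..b}|lborel. (f s - m)\<^sup>2)
           = (LINT s:{a..b}|lborel. (f s)\<^sup>2) - 2 * m * (LINT s:{a..b}|lborel. f s) + m\<^sup>2 * (b - a)"
proof -
  have const: "set_integrable lborel {a..b} (\<lambda>s. m\<^sup>2)"
    unfolding set_integrable_def
    by (intro integrableI_bounded_set_indicator[where B="m\<^sup>2"]) (auto simp: emeasure_lborel_Icc_eq)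
  have lin: "set_integrable lborel {a..b} (\<lambda>s. 2 * m * f s)"
    using f by simp
  have expand: "(\<lambda>s. (f s - m)\<^sup>2) = (\<lambda>s. (f s)\<^sup>2 - 2 * m * f s + m\<^sup>2)"
    by (simp add: power2_eq_square algebra_simps)
  show "set_integrable lborel {a..b} (\<lambda>s. (f s - m)\<^sup>2)"
    unfolding expand using f2 lin const by simp
  show "(LINT s:{a..b}|lborel. (f s - m)\<^sup>2)
           = (LINT s:{a..b}|lborel. (f s)\<^sup>2) - 2 * m * (LINT s:{a..b}|lborel. f s) + m\<^sup>2 * (b - a)"
    unfolding expand using f2 lin const \<open>a \<le> b\<close> by (simp add: set_integral_const)
qed

lemma admissible_set_borel_measurable:
  assumes "admissible T C N u" and "i < N"
  shows "set_borel_measurable lborel {0..T} (u i)"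
  using assms unfolding admissible_def set_borel_measurable_def
  by (subst borel_measurable_restrict_space_iff[symmetric]) auto

lemma admissible_set_integrable:
  assumes "admissible T C N u" and "i < N" and "t \<le> T"
  shows "set_integrable lborel {0..t} (u i)"
    and "set_integrable lborel {0..t} (\<lambda>s. (u i s)\<^sup>2)"
proof -
  have meas: "set_borel_measurable lborel {0..T} (u i)"
    using assms(1,2) by (rule admissible_set_borel_measurable)
  have bound: "\<forall>s\<in>{0..T}. \<bar>u i s\<bar> \<le> C"
    using assms(1,2) unfolding admissible_def by auto
  show "set_integrable lborel {0..t} (u i)"
    using meas bound assms(3) by (rule set_integrable_bounded_interval)
  have "(\<lambda>s. indicator {0..T} s *\<^sub>R (u i s)\<^sup>2) = (\<lambda>s. (indicator {0..T} s *\<^sub>R u i s)\<^sup>2)"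
    by (auto simp: indicator_def)
  then have "set_borel_measurable lborel {0..T} (\<lambda>s. (u i s)\<^sup>2)"
    using borel_measurable_power[OF meas[unfolded set_borel_measurable_def], of 2]
    unfolding set_borel_measurable_def by argo
  moreover have "\<forall>s\<in>{0..T}. \<bar>(u i s)\<^sup>2\<bar> \<le> C\<^sup>2"
  proof
    fix s assume "s \<in> {0..T}"
    then have "\<bar>u i s\<bar> \<le> \<bar>C\<bar>"
      using bound by force
    then show "\<bar>(u i s)\<^sup>2\<bar> \<le> C\<^sup>2"
      by (simp add: abs_le_square_iff)
  qed
  ultimately show "set_integrable lborel {0..t} (\<lambda>s. (u i s)\<^sup>2)"
    using assms(3) by (rule set_integrable_bounded_interval)
qed

definition reduced_cost :: "real \<Rightarrow> real \<Rightarrow> nat \<Rightarrow> (nat \<Rightarrow> real) \<Rightarrow> (nat \<Rightarrow> real) \<Rightarrow> real" where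
  "reduced_cost T lam N x0 c =
     lam / (2 * real N) * (\<Sum>i<N. (c i)\<^sup>2 * T)
     - 1 / (2 * real N) * (\<Sum>i<N. (x0 i + c i * T - (\<Sum>j<N. x0 j + c j * T) / real N)\<^sup>2)"

definition control_mean :: "real \<Rightarrow> (nat \<Rightarrow> real \<Rightarrow> real) \<Rightarrow> nat \<Rightarrow> real" where
  "control_mean T u i = (LINT s:{0..T}|lborel. u i s) / T"

lemma admissible_constant_control:
  assumes "\<forall>i<N. \<bar>c i\<bar> \<le> C"
  shows "admissible T C N (\<lambda>i t. c i)"
  using assms unfolding admissible_def by auto

lemma cost_constant_control:
  assumes "0 \<le> T"
  shows "cost T lam N x0 (\<lambda>i t. c i) = reduced_cost T lam N x0 c"
  using assms unfolding cost_def traj_def mean_traj_def reduced_cost_def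
  by (simp add: set_integral_const mult.commute)

lemma abs_control_mean_le:
  assumes "admissible T C N u" and "i < N" and "T > 0"
  shows "\<bar>control_mean T u i\<bar> \<le> C"
proof -
  have int: "set_integrable lborel {0..T} (u i)"
    using assms(1,2) by (rule admissible_set_integrable) simp
  have const: "set_integrable lborel {0..T} (\<lambda>s. C)"
    by (rule set_integrable_bounded_interval[where B="\<bar>C\<bar>"])
       (auto simp: set_borel_measurable_def)
  have bound: "\<And>s. s \<in> {0..T} \<Longrightarrow> \<bar>u i s\<bar> \<le> C"
    using assms(1,2) unfolding admissible_def by auto
  have "\<bar>LINT s:{0..T}|lborel. u i s\<bar> \<le> (LINT s:{0..T}|lborel. \<bar>u i s\<bar>)"
    using set_integral_norm_bound[OF int] by simp
  also have "\<dots> \<le> (LINT s:{0..T}|lborel. C)"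
    by (rule set_integral_mono[OF set_integrable_abs[OF int] const]) (rule bound)
  also have "\<dots> = C * T"
    using assms(3) by (simp add: set_integral_const)
  finally have "\<bar>LINT s:{0..T}|lborel. u i s\<bar> \<le> C * T" .
  then show ?thesis
    using assms(3) unfolding control_mean_def abs_divide by (simp add: pos_divide_le_eq)
qed

lemma cost_eq_reduced_cost_control_mean:
  assumes "admissible T C N u" and "T > 0"
  shows "cost T lam N x0 u = reduced_cost T lam N x0 (control_mean T u)
           + lam / (2 * real N) * (\<Sum>i<N. LINT s:{0..T}|lborel. (u i s - control_mean T u i)\<^sup>2)"
proof -
  let ?m = "control_mean T u"
  have endpoint: "traj x0 u i T = x0 i + ?m i * T" for i
    using assms(2) by (simp add: traj_def control_mean_def)
  have energy: "(LINT s:{0..T}|lborel. (u i s)\<^sup>2)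
                  = (?m i)\<^sup>2 * T + (LINT s:{0..T}|lborel. (u i s - ?m i)\<^sup>2)" if "i < N" for i
  proof -
    have "(LINT s:{0..T}|lborel. (u i s - ?m i)\<^sup>2)
            = (LINT s:{0..T}|lborel. (u i s)\<^sup>2) - 2 * ?m i * (?m i * T) + (?m i)\<^sup>2 * (T - 0)"
      using set_integral_square_deviation(2)[OF admissible_set_integrable[OF assms(1) that order_refl]]
        assms(2) by (simp add: control_mean_def)
    then show ?thesis
      by (simp add: power2_eq_square)
  qed
  have "(\<Sum>i<N. LINT s:{0..T}|lborel. (u i s)\<^sup>2)
          = (\<Sum>i<N. (?m i)\<^sup>2 * T + (LINT s:{0..T}|lborel. (u i s - ?m i)\<^sup>2))"
    by (rule sum.cong) (simp_all add: energy)
  then show ?thesis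
    unfolding cost_def reduced_cost_def mean_traj_def endpoint sum.distrib
    by (simp add: distrib_left)
qed

lemma reduced_cost_control_mean_le_cost:
  assumes "admissible T C N u" and "T > 0" and "0 \<le> lam"
  shows "reduced_cost T lam N x0 (control_mean T u) \<le> cost T lam N x0 u"
proof -
  have "0 \<le> (LINT s:{0..T}|lborel. (u i s - control_mean T u i)\<^sup>2)" for i
    unfolding set_lebesgue_integral_def by (rule integral_nonneg_AE) (simp add: indicator_def)
  then have "0 \<le> lam / (2 * real N) * (\<Sum>i<N. LINT s:{0..T}|lborel. (u i s - control_mean T u i)\<^sup>2)"
    using assms(3) by (simp add: sum_nonneg)
  then show ?thesis
    using cost_eq_reduced_cost_control_mean[OF assms(1,2)] by simp
qed

lemma optimal_control_minimises_reduced_cost: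
  assumes "optimal_control T lam C N x0 u" and "T > 0" and "0 \<le> lam" and "\<forall>k<N. \<bar>c k\<bar> \<le> C"
  shows "reduced_cost T lam N x0 (control_mean T u) \<le> reduced_cost T lam N x0 c"
proof -
  have "reduced_cost T lam N x0 (control_mean T u) \<le> cost T lam N x0 u"
    using assms(1-3) unfolding optimal_control_def by (intro reduced_cost_control_mean_le_cost) auto
  also have "\<dots> \<le> cost T lam N x0 (\<lambda>i t. c i)"
    using assms(1,4) unfolding optimal_control_def by (simp add: admissible_constant_control)
  also have "\<dots> = reduced_cost T lam N x0 c"
    using assms(2) by (simp add: cost_constant_control)
  finally show ?thesis .
qed

(* Since lam > 0, optimality forces the energy gap in the cost decomposition to vanish. *)

lemma optimal_control_eq_control_mean_AE:
  assumes opt: "optimal_control T lam C N x0 u" and "T > 0" and "lam > 0" and "i < N"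
  shows "AE s in lborel. s \<in> {0..T} \<longrightarrow> u i s = control_mean T u i"
proof -
  let ?m = "control_mean T u"
  define dev where "dev k = (LINT s:{0..T}|lborel. (u k s - ?m k)\<^sup>2)" for k
  have adm: "admissible T C N u"
    using opt unfolding optimal_control_def by simp
  have dev_nonneg: "0 \<le> dev k" for k
    unfolding dev_def set_lebesgue_integral_def by (rule integral_nonneg_AE) (simp add: indicator_def)
  have "cost T lam N x0 u \<le> cost T lam N x0 (\<lambda>k t. ?m k)"
    using opt abs_control_mean_le[OF adm _ \<open>T > 0\<close>]
    unfolding optimal_control_def by (simp add: admissible_constant_control)
  also have "\<dots> = reduced_cost T lam N x0 ?m"
    using \<open>T > 0\<close> by (simp add: cost_constant_control)
  finally have "lam / (2 * real N) * (\<Sum>k<N. dev k) \<le> 0"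
    using cost_eq_reduced_cost_control_mean[OF adm \<open>T > 0\<close>] by (simp add: dev_def)
  moreover have "lam / (2 * real N) > 0"
    using \<open>lam > 0\<close> \<open>i < N\<close> by simp
  ultimately have "(\<Sum>k<N. dev k) \<le> 0"
    by (metis mult_le_cancel_left_pos mult_zero_right)
  then have "(\<Sum>k<N. dev k) = 0"
    using dev_nonneg by (intro antisym sum_nonneg) auto
  then have "dev i = 0"
    using dev_nonneg \<open>i < N\<close> by (simp add: sum_nonneg_eq_0_iff)
  moreover have "integrable lborel (\<lambda>s. indicator {0..T} s *\<^sub>R (u i s - ?m i)\<^sup>2)"
    using set_integral_square_deviation(1)[OF admissible_set_integrable[OF adm \<open>i < N\<close> order_refl]]
      \<open>T > 0\<close> unfolding set_integrable_def by simp
  ultimately have "AE s in lborel. indicator {0..T} s *\<^sub>R (u i s - ?m i)\<^sup>2 = 0"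
    unfolding dev_def set_lebesgue_integral_def
    by (subst integral_nonneg_eq_0_iff_AE[symmetric]) (auto simp: indicator_def)
  then show ?thesis
    by eventually_elim (auto simp: indicator_def)
qed

lemma traj_eq_AE_constant_control:
  assumes "admissible T C N u" and "i < N" and "AE s in lborel. s \<in> {0..T} \<longrightarrow> u i s = c"
    and "t \<in> {0..T}"
  shows "traj x0 u i t = x0 i + c * t"
proof -
  have "set_borel_measurable lborel {0..t} (u i)"
    using admissible_set_borel_measurable[OF assms(1,2)] by (rule set_borel_measurable_subset)
      (use assms(4) in auto)
  moreover have "AE s in lborel. s \<in> {0..t} \<longrightarrow> u i s = c"
    using assms(3) by eventually_elim (use assms(4) in auto)
  ultimately show ?thesis
    using assms(4) by (simp add: traj_def set_integral_eq_const_AE)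
qed

lemma sum_diff_eq_off_two_points:
  fixes f g :: "'a \<Rightarrow> 'b::ab_group_add"
  assumes "finite A" and "i \<in> A" and "j \<in> A" and "i \<noteq> j" and "\<forall>k\<in>A - {i, j}. f k = g k"
  shows "sum f A - sum g A = (f i - g i) + (f j - g j)"
proof -
  have "sum f A - sum g A = (\<Sum>k\<in>A. f k - g k)"
    by (simp add: sum_subtractf)
  also have "\<dots> = (\<Sum>k\<in>{i, j}. f k - g k)"
    by (rule sum.mono_neutral_right) (use assms in auto)
  also have "\<dots> = (f i - g i) + (f j - g j)"
    using \<open>i \<noteq> j\<close> by simp
  finally show ?thesis .
qed

(* Transferring velocity d from agent j to agent i leaves the barycentre unchanged,
  so only two terms of each sum move. *)

lemma reduced_cost_transfer:
  fixes c :: "nat \<Rightarrow> real"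
  assumes "i < N" and "j < N" and "i \<noteq> j"
  shows "reduced_cost T lam N x0 (c(i := c i + d, j := c j - d)) - reduced_cost T lam N x0 c
           = T / real N * (d * ((lam - T) * (c i - c j) - (x0 i - x0 j)) + (lam - T) * d\<^sup>2)"
proof -
  define c' where "c' = c(i := c i + d, j := c j - d)"
  have c'_i: "c' i = c i + d" and c'_j: "c' j = c j - d"
    using \<open>i \<noteq> j\<close> by (simp_all add: c'_def)
  have off: "\<forall>k\<in>{..<N} - {i, j}. c' k = c k"
    by (simp add: c'_def)
  have i_in: "i \<in> {..<N}" and j_in: "j \<in> {..<N}"
    using assms(1,2) by simp_all
  note two_points = sum_diff_eq_off_two_points[OF finite_lessThan i_in j_in \<open>i \<noteq> j\<close>]
  have "(\<Sum>k<N. x0 k + c' k * T) - (\<Sum>k<N. x0 k + c k * T) = 0"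
    by (subst two_points) (auto simp: off c'_i c'_j algebra_simps)
  then have bary: "(\<Sum>k<N. x0 k + c' k * T) = (\<Sum>k<N. x0 k + c k * T)"
    by simp
  define m where "m = (\<Sum>k<N. x0 k + c k * T) / real N"
  have energy: "(\<Sum>k<N. (c' k)\<^sup>2 * T) - (\<Sum>k<N. (c k)\<^sup>2 * T) = 2 * T * (d * (c i - c j) + d\<^sup>2)"
    by (subst two_points) (auto simp: off c'_i c'_j power2_eq_square algebra_simps)
  have spread: "(\<Sum>k<N. (x0 k + c' k * T - m)\<^sup>2) - (\<Sum>k<N. (x0 k + c k * T - m)\<^sup>2)
                  = 2 * T * (d * (x0 i - x0 j + (c i - c j) * T) + d\<^sup>2 * T)"
    by (subst two_points) (auto simp: off c'_i c'_j power2_eq_square algebra_simps)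
  have "reduced_cost T lam N x0 c' - reduced_cost T lam N x0 c
          = lam / (2 * real N) * ((\<Sum>k<N. (c' k)\<^sup>2 * T) - (\<Sum>k<N. (c k)\<^sup>2 * T))
            - 1 / (2 * real N) * ((\<Sum>k<N. (x0 k + c' k * T - m)\<^sup>2) - (\<Sum>k<N. (x0 k + c k * T - m)\<^sup>2))"
    unfolding reduced_cost_def bary m_def[symmetric] by (simp add: right_diff_distrib)
  also have "\<dots> = T / real N * (d * ((lam - T) * (c i - c j) - (x0 i - x0 j)) + (lam - T) * d\<^sup>2)"
    using assms(1) unfolding energy spread by (simp add: field_simps power2_eq_square)
  finally show ?thesis
    unfolding c'_def .
qed

lemma abs_convex_comb_le:
  fixes a b t C :: real
  assumes "\<bar>a\<bar> \<le> C" and "\<bar>b\<bar> \<le> C" and "0 \<le> t" and "t \<le> 1"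
  shows "\<bar>a - t * (a - b)\<bar> \<le> C"
proof -
  have "a - t * (a - b) = (1 - t) * a + t * b"
    by (simp add: algebra_simps)
  also have "\<bar>\<dots>\<bar> \<le> (1 - t) * \<bar>a\<bar> + t * \<bar>b\<bar>"
    using assms(3,4) by (simp add: abs_triangle_ineq[THEN order_trans] abs_mult)
  also have "\<dots> \<le> C"
    using assms by (intro convex_bound_le) auto
  finally show ?thesis .
qed

(* The perturbation moves along the segment from c towards the configuration in which
  agents i and j exchange their velocities, so it stays in the box [-C, C]^N. *)

lemma reduced_cost_minimiser_pair_inequality:
  assumes min: "\<And>c'. \<forall>k<N. \<bar>c' k\<bar> \<le> C \<Longrightarrow> reduced_cost T lam N x0 c \<le> reduced_cost T lam N x0 c'"
    and box: "\<forall>k<N. \<bar>c k\<bar> \<le> C" and "i < N" and "j < N" and "T > 0" and "lam > T"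
  shows "(lam - T) * (c i - c j)\<^sup>2 \<le> (c i - c j) * (x0 i - x0 j)"
proof (rule ccontr)
  define r D q where "r = lam - T" and "D = c i - c j" and "q = (lam - T) * (c i - c j) - (x0 i - x0 j)"
  assume "\<not> ?thesis"
  then have Dq: "D * q > 0"
    by (simp add: r_def D_def q_def power2_eq_square algebra_simps)
  have "r > 0"
    using \<open>lam > T\<close> by (simp add: r_def)
  have "i \<noteq> j"
    using Dq by (auto simp: D_def)
  define t where "t = min 1 (D * q / (2 * r * D\<^sup>2))"
  have "D \<noteq> 0"
    using Dq by auto
  then have t: "0 < t" "t \<le> 1" "r * t * D\<^sup>2 < D * q"
    using Dq \<open>r > 0\<close> by (auto simp: t_def min_def field_simps)
  define c' where "c' = c(i := c i + (- t * D), j := c j - (- t * D))"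
  have "\<forall>k<N. \<bar>c' k\<bar> \<le> C"
  proof (intro allI impI)
    fix k assume "k < N"
    have "\<bar>c i - t * (c i - c j)\<bar> \<le> C" and "\<bar>c j - t * (c j - c i)\<bar> \<le> C"
      using box \<open>i < N\<close> \<open>j < N\<close> t by (simp_all add: abs_convex_comb_le)
    then show "\<bar>c' k\<bar> \<le> C"
      using box \<open>k < N\<close> by (auto simp: c'_def D_def algebra_simps)
  qed
  then have "0 \<le> reduced_cost T lam N x0 c' - reduced_cost T lam N x0 c"
    using min by simp
  also have "\<dots> = T / real N * (t * (r * t * D\<^sup>2 - D * q))"
    unfolding c'_def reduced_cost_transfer[OF \<open>i < N\<close> \<open>j < N\<close> \<open>i \<noteq> j\<close>]
    by (simp add: r_def D_def q_def power2_eq_square algebra_simps)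
  also have "\<dots> < 0"
  proof -
    have "t * (r * t * D\<^sup>2 - D * q) < 0"
      using t by (simp add: mult_pos_neg)
    then show ?thesis
      using \<open>T > 0\<close> \<open>i < N\<close> by (simp add: mult_pos_neg divide_neg_pos)
  qed
  finally show False
    by simp
qed

lemma abs_le_of_sq_le_mult:
  fixes r D e t :: real
  assumes "r > 0" and "r * D\<^sup>2 \<le> D * e" and "0 \<le> t"
  shows "\<bar>D\<bar> \<le> 1 / r * \<bar>e + t * D\<bar>"
proof -
  have "r * \<bar>D\<bar> * \<bar>D\<bar> = r * D\<^sup>2"
    by (simp add: power2_eq_square abs_mult_self_eq)
  also have "\<dots> \<le> D * (e + t * D)"
  proof -
    have "0 \<le> t * D\<^sup>2"
      using assms(3) by simp
    then show ?thesis
      using assms(2) by (simp add: distrib_left power2_eq_square mult.left_commute)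
  qed
  also have "\<dots> \<le> \<bar>e + t * D\<bar> * \<bar>D\<bar>"
    by (simp add: abs_mult[symmetric] mult.commute)
  finally have "r * \<bar>D\<bar> \<le> \<bar>e + t * D\<bar>" if "D \<noteq> 0"
    using that by simp
  then show ?thesis
    using assms(1) by (cases "D = 0") (auto simp: field_simps)
qed

lemma optimal_control_Lipschitz_feedback:
  assumes opt: "optimal_control T lam C N x0 u" and "T > 0" and "lam > T"
  shows "AE t in lborel. t \<in> {0..T} \<longrightarrow>
           (\<forall>i<N. \<forall>j<N. \<bar>u i t - u j t\<bar> \<le> 1 / (lam - T) * \<bar>traj x0 u i t - traj x0 u j t\<bar>)"
proof -
  let ?m = "control_mean T u"
  have adm: "admissible T C N u"
    using opt unfolding optimal_control_def by simp
  have "lam > 0"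
    using \<open>T > 0\<close> \<open>lam > T\<close> by simp
  have pair: "(lam - T) * (?m i - ?m j)\<^sup>2 \<le> (?m i - ?m j) * (x0 i - x0 j)" if "i < N" "j < N" for i j
    using optimal_control_minimises_reduced_cost[OF opt \<open>T > 0\<close>] \<open>lam > 0\<close>
      abs_control_mean_le[OF adm _ \<open>T > 0\<close>] that \<open>T > 0\<close> \<open>lam > T\<close>
    by (intro reduced_cost_minimiser_pair_inequality) auto
  have ae_constant: "AE s in lborel. s \<in> {0..T} \<longrightarrow> u i s = ?m i" if "i < N" for i
    using opt \<open>T > 0\<close> \<open>lam > 0\<close> that by (rule optimal_control_eq_control_mean_AE)
  have traj: "traj x0 u i t = x0 i + ?m i * t" if "i < N" and "t \<in> {0..T}" for i t
    using adm that(1) ae_constant[OF that(1)] that(2) by (rule traj_eq_AE_constant_control)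
  have "AE t in lborel. \<forall>i\<in>{..<N}. t \<in> {0..T} \<longrightarrow> u i t = ?m i"
    using ae_constant by (intro eventually_ball_finite) auto
  then show ?thesis
  proof eventually_elim
    case (elim t)
    show ?case
    proof (intro impI allI)
      fix i j assume "t \<in> {0..T}" "i < N" "j < N"
      have "traj x0 u i t - traj x0 u j t = (x0 i - x0 j) + t * (?m i - ?m j)"
        using traj \<open>t \<in> {0..T}\<close> \<open>i < N\<close> \<open>j < N\<close> by (simp add: algebra_simps)
      moreover have "\<bar>?m i - ?m j\<bar> \<le> 1 / (lam - T) * \<bar>(x0 i - x0 j) + t * (?m i - ?m j)\<bar>"
        using pair[OF \<open>i < N\<close> \<open>j < N\<close>] \<open>lam > T\<close> \<open>t \<in> {0..T}\<close> by (intro abs_le_of_sq_le_mult) auto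
      ultimately show "\<bar>u i t - u j t\<bar> \<le> 1 / (lam - T) * \<bar>traj x0 u i t - traj x0 u j t\<bar>"
        using elim \<open>t \<in> {0..T}\<close> \<open>i < N\<close> \<open>j < N\<close> by simp
    qed
  qed
qed

lemma reduced_cost_two_agents:
  assumes "x0 0 = - 1 / 2" and "x0 1 = 1 / 2" and "T > 0"
  shows "reduced_cost T lam 2 x0 c
           = (2 * lam * ((- c 0 * T)\<^sup>2 + (c 1 * T)\<^sup>2) - T * (- c 0 * T + c 1 * T + 1)\<^sup>2) / (8 * T)"
proof -
  have x1: "x0 (Suc 0) = 1 / 2"
    using assms(2) by simp
  show ?thesis
    using assms(3) by (simp add: reduced_cost_def numeral_2_eq_2 assms(1) x1 field_simps power2_eq_square)
qed

(* For lam <= T the two-agent reduced cost is minimised by spreading apart at full speed: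
  with s = a + b in [-2K, 2K], the difference to the value at s = 2K factors as
  (s - 2K) (lam (s + 2K) - T (s + 2K + 2)), a product of two non-positive numbers. *)

lemma two_agent_bang_bang_le:
  fixes lam T K a b :: real
  assumes "T > 0" and "0 \<le> lam" and "lam \<le> T" and "\<bar>a\<bar> \<le> K" and "\<bar>b\<bar> \<le> K"
  shows "2 * lam * (K\<^sup>2 + K\<^sup>2) - T * (K + K + 1)\<^sup>2 \<le> 2 * lam * (a\<^sup>2 + b\<^sup>2) - T * (a + b + 1)\<^sup>2"
proof -
  define s q where "s = a + b" and "q = 2 * K"
  have "s \<le> q" and "- q \<le> s"
    using assms(4,5) by (auto simp: s_def q_def abs_le_iff)
  have "lam * (s + q) \<le> T * (s + q)"
    using assms(3) \<open>- q \<le> s\<close> by (intro mult_right_mono) auto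
  then have "0 \<le> (s - q) * (lam * (s + q) - T * (s + q + 2))"
    using \<open>s \<le> q\<close> \<open>T > 0\<close> by (intro mult_nonpos_nonpos) (auto simp: algebra_simps)
  then have "lam * q\<^sup>2 - T * (q + 1)\<^sup>2 \<le> lam * s\<^sup>2 - T * (s + 1)\<^sup>2"
    by (simp add: power2_eq_square algebra_simps)
  moreover have "s\<^sup>2 \<le> 2 * (a\<^sup>2 + b\<^sup>2)"
    using sum_squares_ge_zero[of "a - b" 0] by (simp add: s_def power2_eq_square algebra_simps)
  ultimately show ?thesis
    using mult_left_mono[OF \<open>s\<^sup>2 \<le> 2 * (a\<^sup>2 + b\<^sup>2)\<close> \<open>0 \<le> lam\<close>]
    by (simp add: s_def q_def power2_eq_square algebra_simps)
qed

lemma bang_bang_optimal_two_agents: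
  assumes "x0 0 = - 1 / 2" and "x0 1 = 1 / 2" and "T > 0" and "0 \<le> lam" and "lam \<le> T" and "0 \<le> C"
  shows "optimal_control T lam C 2 x0 (\<lambda>i t. if i = 0 then - C else C)"
  unfolding optimal_control_def
proof (intro conjI allI impI)
  let ?c = "\<lambda>i::nat. if i = 0 then - C else C"
  show "admissible T C 2 (\<lambda>i t. ?c i)"
    using \<open>0 \<le> C\<close> by (intro admissible_constant_control) auto
  fix v assume adm: "admissible T C 2 v"
  let ?m = "control_mean T v"
  have a: "\<bar>- ?m 0 * T\<bar> \<le> C * T" and b: "\<bar>?m 1 * T\<bar> \<le> C * T"
    using abs_control_mean_le[OF adm _ \<open>T > 0\<close>, of 0] abs_control_mean_le[OF adm _ \<open>T > 0\<close>, of 1]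
      \<open>T > 0\<close> by (simp_all add: abs_mult)
  have "reduced_cost T lam 2 x0 ?c
          = (2 * lam * ((C * T)\<^sup>2 + (C * T)\<^sup>2) - T * (C * T + C * T + 1)\<^sup>2) / (8 * T)"
    by (simp add: reduced_cost_two_agents[OF assms(1-3)])
  also have "\<dots> \<le> (2 * lam * ((- ?m 0 * T)\<^sup>2 + (?m 1 * T)\<^sup>2) - T * (- ?m 0 * T + ?m 1 * T + 1)\<^sup>2)
                    / (8 * T)"
    using two_agent_bang_bang_le[OF \<open>T > 0\<close> \<open>0 \<le> lam\<close> \<open>lam \<le> T\<close> a b] \<open>T > 0\<close>
    by (intro divide_right_mono) auto
  also have "\<dots> = reduced_cost T lam 2 x0 ?m"
    by (simp only: reduced_cost_two_agents[OF assms(1-3)])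
  also have "\<dots> \<le> cost T lam 2 x0 v"
    using adm \<open>T > 0\<close> \<open>0 \<le> lam\<close> by (rule reduced_cost_control_mean_le_cost)
  finally show "cost T lam 2 x0 (\<lambda>i t. ?c i) \<le> cost T lam 2 x0 v"
    using \<open>T > 0\<close> by (simp add: cost_constant_control)
qed

lemma measure_empirical_measure:
  assumes "N > 0"
  shows "measure (empirical_measure N x) A = real (card ({..<N} \<inter> x -` A)) / real N"
  unfolding empirical_measure_def measure_map_pmf
  using assms by (subst measure_pmf_of_set) auto

lemma narrowly_converges_empirical_measureI:
  assumes "real_distribution M"
    and "\<And>x. (\<lambda>N. measure (empirical_measure N (x0 N)) {..x}) \<longlonglongrightarrow> measure M {..x}"
  shows "narrowly_converges (\<lambda>N. empirical_measure N (x0 N)) M"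
  unfolding narrowly_converges_def
proof (intro allI impI)
  fix f :: "real \<Rightarrow> real"
  assume f: "continuous_on UNIV f \<and> bounded (range f)"
  then obtain B where B: "\<And>x. norm (f x) \<le> B"
    unfolding bounded_iff by auto
  have cont: "isCont f x" for x
    using f by (simp add: continuous_on_eq_continuous_at)
  have f_meas: "f \<in> borel_measurable borel"
    using f by (intro borel_measurable_continuous_onI) auto
  define \<mu> where "\<mu> N = distr (empirical_measure N (x0 N)) borel (\<lambda>x. x)" for N
  have id_meas: "(\<lambda>x. x) \<in> measurable (empirical_measure N (x0 N)) borel" for N
    by (simp add: empirical_measure_def)
  have distr: "real_distribution (\<mu> N)" for N
  proof -
    interpret prob_space "empirical_measure N (x0 N)"
      unfolding empirical_measure_def by (rule measure_pmf.prob_space_axioms)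
    show ?thesis
      unfolding \<mu>_def by (rule real_distribution_distr) (simp add: id_meas)
  qed
  have "space (empirical_measure N (x0 N)) = UNIV" for N
    by (simp add: empirical_measure_def)
  then have weak: "weak_conv_m \<mu> M"
    unfolding weak_conv_m_def weak_conv_def cdf_def \<mu>_def
    using assms(2) id_meas by (simp add: measure_distr)
  have "(\<lambda>N. integral\<^sup>L (\<mu> N) f) \<longlonglongrightarrow> integral\<^sup>L M f"
    by (rule weak_conv_imp_integral_bdd_continuous_conv[OF distr assms(1) weak cont B])
  then show "(\<lambda>N. integral\<^sup>L (empirical_measure N (x0 N)) f) \<longlonglongrightarrow> integral\<^sup>L M f"
    unfolding \<mu>_def integral_distr[OF id_meas f_meas] .
qed

lemma floor_mult_div_tendsto:
  fixes a b :: real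
  shows "(\<lambda>N. real_of_int \<lfloor>real N * a + b\<rfloor> / real N) \<longlonglongrightarrow> a"
proof (rule tendsto_sandwich)
  show "\<forall>\<^sub>F N in sequentially. a + (b - 1) / real N \<le> real_of_int \<lfloor>real N * a + b\<rfloor> / real N"
  proof (rule eventually_sequentiallyI[of 1])
    fix N :: nat assume "1 \<le> N"
    have "real N * a + b - 1 \<le> real_of_int \<lfloor>real N * a + b\<rfloor>"
      using real_of_int_floor_gt_diff_one[of "real N * a + b"] by linarith
    then have "(real N * a + b - 1) / real N \<le> real_of_int \<lfloor>real N * a + b\<rfloor> / real N"
      by (simp add: divide_right_mono)
    then show "a + (b - 1) / real N \<le> real_of_int \<lfloor>real N * a + b\<rfloor> / real N"
      using \<open>1 \<le> N\<close> by (simp add: field_simps)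
  qed
  show "\<forall>\<^sub>F N in sequentially. real_of_int \<lfloor>real N * a + b\<rfloor> / real N \<le> a + b / real N"
    by (rule eventually_sequentiallyI[of 1]) (auto simp: field_simps)
  show "(\<lambda>N. a + (b - 1) / real N) \<longlonglongrightarrow> a" and "(\<lambda>N. a + b / real N) \<longlonglongrightarrow> a"
    by (auto intro!: tendsto_eq_intros lim_const_over_n)
qed

lemma measure_uniform_interval_atMost:
  "measure (uniform_measure lborel {-1..1::real}) {..x} = min 1 (max 0 ((x + 1) / 2))"
proof -
  have "measure (uniform_measure lborel {-1..1::real}) {..x}
          = measure lborel ({-1..1} \<inter> {..x}) / measure lborel {-1..1::real}"
    by (rule measure_uniform_measure) auto
  also have "{-1..1} \<inter> {..x} = {-1..min 1 x}"
    by auto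
  finally show ?thesis
    by (auto simp: min_def max_def)
qed

lemma symmetric_configI:
  assumes "bij_betw \<sigma> {..<N} {..<N}" and "\<And>i. i < N \<Longrightarrow> x (\<sigma> i) = - x i"
  shows "symmetric_config N x"
proof -
  have "image_mset (\<lambda>i. - x i) (mset_set {..<N}) = image_mset (x \<circ> \<sigma>) (mset_set {..<N})"
    by (rule image_mset_cong) (simp add: assms(2))
  also have "\<dots> = image_mset x (image_mset \<sigma> (mset_set {..<N}))"
    by (simp add: multiset.map_comp)
  also have "image_mset \<sigma> (mset_set {..<N}) = mset_set {..<N}"
    using assms(1) by (simp add: bij_betw_def image_mset_mset_set)
  finally show ?thesis
    unfolding symmetric_config_def .
qed

definition grid_config :: "nat \<Rightarrow> nat \<Rightarrow> real" where
  "grid_config N i = (2 * real i + 1 - real N) / real N"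

lemma grid_config_in_interval: "i < N \<Longrightarrow> grid_config N i \<in> {-1..1}"
  unfolding grid_config_def by (auto simp: field_simps)

lemma symmetric_config_grid_config: "symmetric_config N (grid_config N)"
proof (rule symmetric_configI)
  let ?mirror = "\<lambda>i. N - 1 - i"
  have "inj_on ?mirror {..<N}"
    by (auto simp: inj_on_def)
  moreover have "?mirror ` {..<N} = {..<N}"
    using \<open>inj_on ?mirror {..<N}\<close> by (intro endo_inj_surj) auto
  ultimately show "bij_betw ?mirror {..<N} {..<N}"
    by (simp add: bij_betw_def)
  show "grid_config N (?mirror i) = - grid_config N i" if "i < N" for i
    using that by (simp add: grid_config_def of_nat_diff field_simps)
qed

lemma measure_empirical_grid_config_atMost:
  assumes "N > 0"
  shows "measure (empirical_measure N (grid_config N)) {..x}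
           = min 1 (max 0 (real_of_int \<lfloor>real N * ((x + 1) / 2) + 1 / 2\<rfloor> / real N))"
proof -
  define k where "k = \<lfloor>real N * ((x + 1) / 2) + 1 / 2\<rfloor>"
  have "grid_config N i \<le> x \<longleftrightarrow> i < nat k" for i
  proof -
    have "grid_config N i \<le> x \<longleftrightarrow> real (i + 1) \<le> real N * ((x + 1) / 2) + 1 / 2"
      using assms unfolding grid_config_def by (simp add: field_simps)
    also have "\<dots> \<longleftrightarrow> int (i + 1) \<le> k"
      unfolding k_def by (simp only: le_floor_iff of_int_of_nat_eq)
    also have "\<dots> \<longleftrightarrow> i < nat k"
      by linarith
    finally show ?thesis .
  qed
  then have "{..<N} \<inter> grid_config N -` {..x} = {..<min N (nat k)}"
    by (intro set_eqI) (simp only: Int_iff vimage_eq atMost_iff lessThan_iff min_less_iff_conj)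
  then have "measure (empirical_measure N (grid_config N)) {..x} = real (min N (nat k)) / real N"
    using assms by (simp add: measure_empirical_measure)
  also have "\<dots> = min 1 (real (nat k) / real N)"
    using assms by (simp add: of_nat_min min_divide_distrib_right)
  also have "real (nat k) = max 0 (real_of_int k)"
    by (cases "k \<le> 0") auto
  also have "max 0 (real_of_int k) / real N = max 0 (real_of_int k / real N)"
    by (simp add: max_divide_distrib_right)
  finally show ?thesis
    unfolding k_def .
qed

lemma narrowly_converges_grid_config:
  "narrowly_converges (\<lambda>N. empirical_measure N (grid_config N)) (uniform_measure lborel {-1..1})"
proof (rule narrowly_converges_empirical_measureI)
  show "real_distribution (uniform_measure lborel {-1..1::real})"
    by (auto simp: real_distribution_def real_distribution_axioms_def intro!: prob_space_uniform_measure)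
  fix x :: real
  have "(\<lambda>N. min 1 (max 0 (real_of_int \<lfloor>real N * ((x + 1) / 2) + 1 / 2\<rfloor> / real N)))
          \<longlonglongrightarrow> min 1 (max 0 ((x + 1) / 2))"
    by (intro tendsto_min tendsto_max tendsto_const floor_mult_div_tendsto)
  moreover have "\<forall>\<^sub>F N in sequentially.
      min 1 (max 0 (real_of_int \<lfloor>real N * ((x + 1) / 2) + 1 / 2\<rfloor> / real N))
        = measure (empirical_measure N (grid_config N)) {..x}"
    by (rule eventually_sequentiallyI[of 1]) (simp add: measure_empirical_grid_config_atMost)
  ultimately show "(\<lambda>N. measure (empirical_measure N (grid_config N)) {..x})
                     \<longlonglongrightarrow> measure (uniform_measure lborel {-1..1}) {..x}"
    unfolding measure_uniform_interval_atMost by (rule Lim_transform_eventually)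
qed

(* For lam = T the factor 1 / (lam - T) is 1 / 0 = 0; for lam < T it is negative. *)

lemma feedback_bound_fails_if_not_coercive:
  assumes "T > 0" and "lam \<le> T" and "i < N" and "j < N" and "\<forall>t\<in>{0..T}. u i t \<noteq> u j t"
  shows "\<not> (AE t in lborel. t \<in> {0..T} \<longrightarrow>
              (\<forall>i<N. \<forall>j<N. \<bar>u i t - u j t\<bar> \<le> 1 / (lam - T) * \<bar>traj x0 u i t - traj x0 u j t\<bar>))"
proof
  assume bound: "AE t in lborel. t \<in> {0..T} \<longrightarrow>
    (\<forall>i<N. \<forall>j<N. \<bar>u i t - u j t\<bar> \<le> 1 / (lam - T) * \<bar>traj x0 u i t - traj x0 u j t\<bar>)"
  have nonpos: "1 / (lam - T) * \<bar>traj x0 u i t - traj x0 u j t\<bar> \<le> 0" for t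
    using \<open>lam \<le> T\<close> by (simp add: divide_nonneg_nonpos)
  have "AE t in lborel. t \<notin> {0..T}"
    using bound
  proof eventually_elim
    case (elim t)
    show ?case
    proof
      assume "t \<in> {0..T}"
      then have "\<bar>u i t - u j t\<bar> \<le> 1 / (lam - T) * \<bar>traj x0 u i t - traj x0 u j t\<bar>"
        using elim \<open>i < N\<close> \<open>j < N\<close> by blast
      also have "\<dots> \<le> 0"
        by (rule nonpos)
      finally show False
        using assms(5) \<open>t \<in> {0..T}\<close> by simp
    qed
  qed
  then have "emeasure lborel {0..T} = 0"
    by (subst (asm) AE_iff_measurable[where N="{0..T}"]) auto
  then show False
    using \<open>T > 0\<close> by simp
qed

theorem proposition6p3:
  fixes T lam C :: real
  assumes "T > 0" and "lam > 0" and "C > 0"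
  shows "lam > T \<longleftrightarrow>
    (\<forall>x0 :: nat \<Rightarrow> nat \<Rightarrow> real.
       (\<forall>N\<ge>1. \<forall>i<N. x0 N i \<in> {-1..1}) \<and>
       (\<forall>N\<ge>1. symmetric_config N (x0 N)) \<and>
       narrowly_converges (\<lambda>N. empirical_measure N (x0 N)) (uniform_measure lborel {-1..1})
       \<longrightarrow>
       (\<forall>N\<ge>1. \<forall>u. optimal_control T lam C N (x0 N) u \<longrightarrow>
          (AE t in lborel. t \<in> {0..T} \<longrightarrow>
             (\<forall>i<N. \<forall>j<N. \<bar>u i t - u j t\<bar> \<le>
                 1 / (lam - T) * \<bar>traj (x0 N) u i t - traj (x0 N) u j t\<bar>))))"
proof (intro iffI allI impI, goal_cases coercive bound)
  case (coercive x0 N u)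
  then show ?case
    using \<open>T > 0\<close> by (intro optimal_control_Lipschitz_feedback) auto
next
  case bound
  show ?case
  proof (rule ccontr)
    assume "\<not> lam > T"
    let ?u = "\<lambda>(i::nat) (t::real). if i = 0 then - C else C"
    have "grid_config 2 0 = - 1 / 2" and "grid_config 2 1 = 1 / 2"
      by (simp_all add: grid_config_def)
    then have optimal: "optimal_control T lam C 2 (grid_config 2) ?u"
      using assms \<open>\<not> lam > T\<close> by (intro bang_bang_optimal_two_agents) auto
    have grid: "(\<forall>N\<ge>1. \<forall>i<N. grid_config N i \<in> {-1..1}) \<and> (\<forall>N\<ge>1. symmetric_config N (grid_config N)) \<and>
        narrowly_converges (\<lambda>N. empirical_measure N (grid_config N)) (uniform_measure lborel {-1..1})"
      using grid_config_in_interval symmetric_config_grid_config narrowly_converges_grid_config by blast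
    have "AE t in lborel. t \<in> {0..T} \<longrightarrow> (\<forall>i<2. \<forall>j<2. \<bar>?u i t - ?u j t\<bar> \<le>
                 1 / (lam - T) * \<bar>traj (grid_config 2) ?u i t - traj (grid_config 2) ?u j t\<bar>)"
      by (rule bound[rule_format, OF grid]) (simp_all add: optimal)
    moreover have "\<forall>t\<in>{0..T}. ?u 0 t \<noteq> ?u 1 t"
      using \<open>C > 0\<close> by simp
    ultimately show False
      using feedback_bound_fails_if_not_coercive[of T lam 0 2 1] \<open>T > 0\<close> \<open>\<not> lam > T\<close> by simp
  qed
qed

end
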